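(* Let $R$ be an integral domain and $\star$ a star operation on $R$. Every $\star$-invertible nonzero ideal $I$ of $R$ (i.e. $(II^{-1})^{\star}=R$) is $\star$-basic, and every nonzero ideal $I$ with $(I^2)^{\star}=I^{\star}$ is $\star$-basic.
   Context: Let $R$ be a domain with quotient field $K$ and $\mathcal F(R)$ its set of nonzero fractional ideals. A star operation is a map $I\mapsto I^\star$ on $\mathcal F(R)$ such that for all nonzero $a\in K$ and $I,J\in\mathcal F(R)$: $(aI)^\star=aI^\star$, $R^\star=R$; $I\subseteq I^\star$, and $I\subseteq J$ implies $I^\star\subseteq J^\star$; $I^{\star\star}=I^\star$. Here $I^{-1}=(R:I)=\{x\in K: xI\subseteq R\}$. For a nonzero ideal $I$, an ideal $J\subseteq I$ is a $\star$-reduction of $I$ if $(JI^n)^\star=(I^{n+1})^\star$ for some integer $n\ge 0$; it is a trivial $\star$-reduction if $J^\star=I^\star$. $I$ is $\star$-basic if every $\star$-reduction of $I$ is trivial. *)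

theory Defs
  imports "HOL-Computational_Algebra.Fraction_Field"
begin

text \<open>The domain R is modelled by a type 'a of class idom; its quotient field K is
  'a fract, and R is identified with its image in K.\<close>

definition ringR :: "'a::idom fract set" where
  "ringR = {Fract a 1 | a. True}"

definition R_submodule :: "'a::idom fract set \<Rightarrow> bool" where
  "R_submodule M \<longleftrightarrow> 0 \<in> M \<and> (\<forall>x\<in>M. \<forall>y\<in>M. x + y \<in> M)
     \<and> (\<forall>r\<in>ringR. \<forall>x\<in>M. r * x \<in> M)"

definition frac_ideal :: "'a::idom fract set \<Rightarrow> bool" where
  "frac_ideal I \<longleftrightarrow> R_submodule I \<and> I \<noteq> {0}
     \<and> (\<exists>d\<in>ringR. d \<noteq> 0 \<and> (\<forall>x\<in>I. d * x \<in> ringR))"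

definition nz_ideal :: "'a::idom fract set \<Rightarrow> bool" where
  "nz_ideal I \<longleftrightarrow> R_submodule I \<and> I \<subseteq> ringR \<and> I \<noteq> {0}"

definition ideal_mult :: "'a::idom fract set \<Rightarrow> 'a fract set \<Rightarrow> 'a fract set" where
  "ideal_mult I J = \<Inter>{M. R_submodule M \<and> {a * b | a b. a \<in> I \<and> b \<in> J} \<subseteq> M}"

fun ideal_pow :: "'a::idom fract set \<Rightarrow> nat \<Rightarrow> 'a fract set" where
  "ideal_pow I 0 = ringR"
| "ideal_pow I (Suc n) = ideal_mult I (ideal_pow I n)"

text \<open>I^{-1} = (R : I).\<close>
definition frac_inv :: "'a::idom fract set \<Rightarrow> 'a fract set" where
  "frac_inv I = {x. \<forall>y\<in>I. x * y \<in> ringR}"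

definition scale :: "'a::idom fract \<Rightarrow> 'a fract set \<Rightarrow> 'a fract set" where
  "scale a I = (\<lambda>x. a * x) ` I"

definition star_operation :: "('a::idom fract set \<Rightarrow> 'a fract set) \<Rightarrow> bool" where
  "star_operation st \<longleftrightarrow>
     (\<forall>I. frac_ideal I \<longrightarrow> frac_ideal (st I))
   \<and> (\<forall>a I. a \<noteq> 0 \<and> frac_ideal I \<longrightarrow> st (scale a I) = scale a (st I))
   \<and> st ringR = ringR
   \<and> (\<forall>I. frac_ideal I \<longrightarrow> I \<subseteq> st I)
   \<and> (\<forall>I J. frac_ideal I \<and> frac_ideal J \<and> I \<subseteq> J \<longrightarrow> st I \<subseteq> st J)
   \<and> (\<forall>I. frac_ideal I \<longrightarrow> st (st I) = st I)"

definition star_reduction ::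
  "('a::idom fract set \<Rightarrow> 'a fract set) \<Rightarrow> 'a fract set \<Rightarrow> 'a fract set \<Rightarrow> bool" where
  "star_reduction st J I \<longleftrightarrow> nz_ideal J \<and> J \<subseteq> I \<and>
     (\<exists>n. st (ideal_mult J (ideal_pow I n)) = st (ideal_pow I (Suc n)))"

definition star_basic :: "('a::idom fract set \<Rightarrow> 'a fract set) \<Rightarrow> 'a fract set \<Rightarrow> bool" where
  "star_basic st I \<longleftrightarrow> (\<forall>J. star_reduction st J I \<longrightarrow> st J = st I)"

end

theory Submission
  imports Defs
begin

text \<open>Both parts rest on the rule \<open>(A B\<^sup>\<star>)\<^sup>\<star> = (A B)\<^sup>\<star>\<close>, which follows from
  \<open>(a B)\<^sup>\<star> = a B\<^sup>\<star>\<close>. If \<open>(I I\<^sup>-\<^sup>1)\<^sup>\<star> = R\<close>, then multiplying by \<open>I\<^sup>-\<^sup>1\<close> cancels \<open>I\<close> up to \<open>\<star>\<close>,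
  so \<open>(J I\<^sup>n)\<^sup>\<star> = (I\<^sup>n\<^sup>+\<^sup>1)\<^sup>\<star>\<close> reduces step by step to \<open>J\<^sup>\<star> = I\<^sup>\<star>\<close>. If \<open>(I\<^sup>2)\<^sup>\<star> = I\<^sup>\<star>\<close>, then
  all powers satisfy \<open>(I\<^sup>n\<^sup>+\<^sup>1)\<^sup>\<star> = I\<^sup>\<star>\<close>, so a reduction gives \<open>(J I\<^sup>n)\<^sup>\<star> = I\<^sup>\<star>\<close>; since
  \<open>J I\<^sup>n \<subseteq> J \<subseteq> I\<close>, monotonicity squeezes \<open>J\<^sup>\<star>\<close> between \<open>(J I\<^sup>n)\<^sup>\<star>\<close> and \<open>I\<^sup>\<star>\<close>.\<close>

lemma ringR_iff: "x \<in> ringR \<longleftrightarrow> (\<exists>a. x = Fract a 1)"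
  unfolding ringR_def by auto

lemma ringR_add: "x \<in> ringR \<Longrightarrow> y \<in> ringR \<Longrightarrow> x + y \<in> ringR"
  unfolding ringR_iff by auto

lemma ringR_mult: "x \<in> ringR \<Longrightarrow> y \<in> ringR \<Longrightarrow> x * y \<in> ringR"
  unfolding ringR_iff by auto

lemma zero_in_ringR: "0 \<in> ringR"
  unfolding ringR_iff by (metis Zero_fract_def)

lemma one_in_ringR: "1 \<in> ringR"
  unfolding ringR_iff by (metis One_fract_def)

lemma ex_denominator_in_ringR: "\<exists>r\<in>ringR. r \<noteq> 0 \<and> r * (a :: 'a::idom fract) \<in> ringR"
proof (cases a)
  case (Fract p q)
  then have "Fract q 1 * a = Fract p 1"
    by (simp add: eq_fract mult.commute)
  with Fract show ?thesis
    by (auto simp: ringR_iff Zero_fract_def eq_fract intro!: bexI[of _ "Fract q 1"])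
qed

lemma R_submodule_ringR: "R_submodule ringR"
  unfolding R_submodule_def by (simp add: zero_in_ringR ringR_add ringR_mult)

lemma R_submodule_mult_preimage: "R_submodule M \<Longrightarrow> R_submodule {x. x * c \<in> M}"
  unfolding R_submodule_def by (auto simp: distrib_right mult.assoc)

lemma R_submodule_scale:
  assumes M: "R_submodule M"
  shows "R_submodule (scale a M)"
  unfolding R_submodule_def scale_def
proof (intro conjI ballI)
  show "0 \<in> (*) a ` M"
    using M by (metis R_submodule_def image_eqI mult_zero_right)
next
  fix x y assume "x \<in> (*) a ` M" "y \<in> (*) a ` M"
  then show "x + y \<in> (*) a ` M"
    using M by (auto simp: R_submodule_def distrib_left[symmetric])
next
  fix r x :: "'a fract" assume "r \<in> ringR" "x \<in> (*) a ` M"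
  then show "r * x \<in> (*) a ` M"
    using M by (auto simp: R_submodule_def mult.left_commute[of r a])
qed

lemma R_submodule_frac_inv: "R_submodule (frac_inv I)"
  unfolding R_submodule_def frac_inv_def
  by (auto simp: distrib_right mult.assoc zero_in_ringR ringR_add ringR_mult)

lemma R_submodule_ideal_mult: "R_submodule (ideal_mult I J)"
  unfolding ideal_mult_def R_submodule_def by auto

lemma mult_in_ideal_mult: "a \<in> I \<Longrightarrow> b \<in> J \<Longrightarrow> a * b \<in> ideal_mult I J"
  unfolding ideal_mult_def by auto

lemma ideal_mult_least:
  "R_submodule M \<Longrightarrow> (\<And>a b. a \<in> I \<Longrightarrow> b \<in> J \<Longrightarrow> a * b \<in> M) \<Longrightarrow> ideal_mult I J \<subseteq> M"
  unfolding ideal_mult_def by auto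

lemma ideal_mult_mono: "I \<subseteq> I' \<Longrightarrow> J \<subseteq> J' \<Longrightarrow> ideal_mult I J \<subseteq> ideal_mult I' J'"
  by (rule ideal_mult_least[OF R_submodule_ideal_mult]) (auto intro: mult_in_ideal_mult)

lemma ideal_mult_commute: "ideal_mult I J = ideal_mult J I"
proof -
  have "ideal_mult I J \<subseteq> ideal_mult J I" for I J :: "'a::idom fract set"
    by (rule ideal_mult_least[OF R_submodule_ideal_mult]) (metis mult_in_ideal_mult mult.commute)
  then show ?thesis by blast
qed

lemma ideal_mult_assoc_subset: "ideal_mult (ideal_mult I J) K \<subseteq> ideal_mult I (ideal_mult J K)"
proof (rule ideal_mult_least[OF R_submodule_ideal_mult])
  fix x c assume x: "x \<in> ideal_mult I J" and c: "c \<in> K"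
  have "ideal_mult I J \<subseteq> {x. x * c \<in> ideal_mult I (ideal_mult J K)}"
    by (rule ideal_mult_least[OF R_submodule_mult_preimage[OF R_submodule_ideal_mult]])
      (auto simp: mult.assoc intro!: mult_in_ideal_mult c)
  with x show "x * c \<in> ideal_mult I (ideal_mult J K)" by auto
qed

lemma ideal_mult_assoc: "ideal_mult (ideal_mult I J) K = ideal_mult I (ideal_mult J K)"
proof
  have "ideal_mult I (ideal_mult J K) = ideal_mult (ideal_mult K J) I"
    by (simp add: ideal_mult_commute)
  also have "\<dots> \<subseteq> ideal_mult K (ideal_mult J I)"
    by (rule ideal_mult_assoc_subset)
  also have "\<dots> = ideal_mult (ideal_mult I J) K"
    by (simp add: ideal_mult_commute)
  finally show "ideal_mult I (ideal_mult J K) \<subseteq> ideal_mult (ideal_mult I J) K" .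
qed (rule ideal_mult_assoc_subset)

lemma ideal_mult_ringR_right: "R_submodule I \<Longrightarrow> ideal_mult I ringR = I"
proof
  assume I: "R_submodule I"
  show "ideal_mult I ringR \<subseteq> I"
    using I unfolding R_submodule_def
    by (intro ideal_mult_least[OF I]) (metis mult.commute)
  show "I \<subseteq> ideal_mult I ringR"
    using mult_in_ideal_mult[OF _ one_in_ringR, of _ I] by auto
qed

lemma ideal_mult_subset_left:
  assumes "R_submodule J" and "I \<subseteq> ringR"
  shows "ideal_mult J I \<subseteq> J"
  using assms unfolding R_submodule_def
  by (intro ideal_mult_least assms(1)) (metis subsetD mult.commute)

lemma ideal_pow_subset_ringR: "I \<subseteq> ringR \<Longrightarrow> ideal_pow I n \<subseteq> ringR"
  by (induction n) (auto intro!: ideal_mult_least[OF R_submodule_ringR] ringR_mult)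

lemma ideal_pow_Suc_right: "ideal_pow I (Suc n) = ideal_mult (ideal_pow I n) I"
  by (simp add: ideal_mult_commute)

lemma frac_ideal_R_submodule: "frac_ideal I \<Longrightarrow> R_submodule I"
  unfolding frac_ideal_def by auto

lemma frac_ideal_ex_nonzero: "frac_ideal I \<Longrightarrow> \<exists>a\<in>I. a \<noteq> 0"
  unfolding frac_ideal_def R_submodule_def by auto

lemma frac_ideal_ringR: "frac_ideal ringR"
  unfolding frac_ideal_def
  using R_submodule_ringR one_in_ringR ringR_mult
  by (metis empty_iff insert_iff one_neq_zero)

lemma frac_ideal_if_nz_ideal: "nz_ideal I \<Longrightarrow> frac_ideal I"
  unfolding nz_ideal_def frac_ideal_def by (metis one_in_ringR mult_1 one_neq_zero subsetD)

lemma frac_ideal_ideal_mult: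
  assumes A: "frac_ideal A" and B: "frac_ideal B"
  shows "frac_ideal (ideal_mult A B)"
proof -
  obtain a b where ab: "a \<in> A" "a \<noteq> 0" "b \<in> B" "b \<noteq> 0"
    using frac_ideal_ex_nonzero[OF A] frac_ideal_ex_nonzero[OF B] by blast
  obtain dA dB where d: "dA \<in> ringR" "dA \<noteq> 0" "\<forall>x\<in>A. dA * x \<in> ringR"
    "dB \<in> ringR" "dB \<noteq> 0" "\<forall>x\<in>B. dB * x \<in> ringR"
    using A B unfolding frac_ideal_def by blast
  have "ideal_mult A B \<subseteq> {x. x * (dA * dB) \<in> ringR}"
  proof (rule ideal_mult_least[OF R_submodule_mult_preimage[OF R_submodule_ringR]])
    fix x y assume "x \<in> A" "y \<in> B"
    then have "(dA * x) * (dB * y) \<in> ringR" using d ringR_mult by blast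
    then show "x * y \<in> {x. x * (dA * dB) \<in> ringR}" by (simp add: algebra_simps)
  qed
  moreover have "a * b \<in> ideal_mult A B" "a * b \<noteq> 0"
    using ab mult_in_ideal_mult by auto
  moreover have "dA * dB \<in> ringR" "dA * dB \<noteq> 0"
    using d ringR_mult by auto
  ultimately show ?thesis
    unfolding frac_ideal_def using R_submodule_ideal_mult
    by (intro conjI bexI[of _ "dA * dB"]) (auto simp: mult.commute)
qed

lemma frac_ideal_scale:
  assumes B: "frac_ideal B" and a: "a \<noteq> 0"
  shows "frac_ideal (scale a B)"
proof -
  obtain b where b: "b \<in> B" "b \<noteq> 0" using frac_ideal_ex_nonzero[OF B] by blast
  obtain d where d: "d \<in> ringR" "d \<noteq> 0" "\<forall>x\<in>B. d * x \<in> ringR"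
    using B unfolding frac_ideal_def by blast
  obtain r where r: "r \<in> ringR" "r \<noteq> 0" "r * a \<in> ringR"
    using ex_denominator_in_ringR by blast
  have "(r * d) * (a * y) \<in> ringR" if "y \<in> B" for y
    using ringR_mult[OF r(3) d(3)[rule_format, OF that]] by (simp add: algebra_simps)
  moreover have "scale a B \<noteq> {0}"
  proof -
    have "a * b \<in> scale a B" "a * b \<noteq> 0"
      using a b by (auto simp: scale_def)
    then show ?thesis by blast
  qed
  moreover have "r * d \<in> ringR" "r * d \<noteq> 0"
    using r d ringR_mult by auto
  ultimately show ?thesis
    unfolding frac_ideal_def using R_submodule_scale[OF frac_ideal_R_submodule[OF B]]
    by (intro conjI bexI[of _ "r * d"]) (auto simp: scale_def)
qed

lemma frac_ideal_ideal_pow: "frac_ideal I \<Longrightarrow> frac_ideal (ideal_pow I n)"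
  by (induction n) (simp_all add: frac_ideal_ringR frac_ideal_ideal_mult)

lemma frac_ideal_frac_inv:
  assumes "nz_ideal I"
  shows "frac_ideal (frac_inv I)"
proof -
  obtain a where a: "a \<in> I" "a \<noteq> 0"
    using assms unfolding nz_ideal_def R_submodule_def by blast
  have "1 \<in> frac_inv I"
    using assms by (auto simp: nz_ideal_def frac_inv_def)
  moreover have "\<forall>x\<in>frac_inv I. a * x \<in> ringR"
    using a by (auto simp: frac_inv_def mult.commute)
  ultimately show ?thesis
    unfolding frac_ideal_def using R_submodule_frac_inv a assms
    by (intro conjI bexI[of _ a]) (auto simp: nz_ideal_def)
qed

locale star_op =
  fixes st :: "'a::idom fract set \<Rightarrow> 'a fract set"
  assumes star_operation: "star_operation st"
begin

lemma frac_ideal_star: "frac_ideal I \<Longrightarrow> frac_ideal (st I)"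
  using star_operation unfolding star_operation_def by metis

lemma star_scale: "a \<noteq> 0 \<Longrightarrow> frac_ideal I \<Longrightarrow> st (scale a I) = scale a (st I)"
  using star_operation unfolding star_operation_def by metis

lemma subset_star: "frac_ideal I \<Longrightarrow> I \<subseteq> st I"
  using star_operation unfolding star_operation_def by metis

lemma star_mono: "frac_ideal I \<Longrightarrow> frac_ideal J \<Longrightarrow> I \<subseteq> J \<Longrightarrow> st I \<subseteq> st J"
  using star_operation unfolding star_operation_def by metis

lemma star_idem: "frac_ideal I \<Longrightarrow> st (st I) = st I"
  using star_operation unfolding star_operation_def by metis

lemma star_ideal_mult_star_right:
  assumes A: "frac_ideal A" and B: "frac_ideal B"
  shows "st (ideal_mult A (st B)) = st (ideal_mult A B)"
proof
  have AB: "frac_ideal (ideal_mult A B)"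
    using A B frac_ideal_ideal_mult by blast
  have A_stB: "frac_ideal (ideal_mult A (st B))"
    using A B frac_ideal_ideal_mult frac_ideal_star by blast
  have "ideal_mult A (st B) \<subseteq> st (ideal_mult A B)"
  proof (rule ideal_mult_least)
    show "R_submodule (st (ideal_mult A B))"
      using frac_ideal_star[OF AB] frac_ideal_R_submodule by blast
    fix a y assume a: "a \<in> A" and y: "y \<in> st B"
    show "a * y \<in> st (ideal_mult A B)"
    proof (cases "a = 0")
      case True
      then show ?thesis
        using frac_ideal_R_submodule[OF frac_ideal_star[OF AB]] by (simp add: R_submodule_def)
    next
      case False
      have "a * y \<in> scale a (st B)" using y by (auto simp: scale_def)
      also have "\<dots> = st (scale a B)" using star_scale[OF False B] by simp
      also have "\<dots> \<subseteq> st (ideal_mult A B)"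
        by (rule star_mono[OF frac_ideal_scale[OF B False] AB])
          (auto simp: scale_def a intro: mult_in_ideal_mult)
      finally show ?thesis .
    qed
  qed
  then have "st (ideal_mult A (st B)) \<subseteq> st (st (ideal_mult A B))"
    by (rule star_mono[OF A_stB frac_ideal_star[OF AB]])
  then show "st (ideal_mult A (st B)) \<subseteq> st (ideal_mult A B)"
    using star_idem[OF AB] by simp
  show "st (ideal_mult A B) \<subseteq> st (ideal_mult A (st B))"
    by (rule star_mono[OF AB A_stB]) (rule ideal_mult_mono, auto simp: subset_star B)
qed

lemma star_ideal_mult_star_left:
  "frac_ideal A \<Longrightarrow> frac_ideal B \<Longrightarrow> st (ideal_mult (st A) B) = st (ideal_mult A B)"
  using star_ideal_mult_star_right ideal_mult_commute by metis

lemma star_eq_star_mult_mult_inverse: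
  assumes A: "frac_ideal A" and I: "frac_ideal I" and V: "frac_ideal V"
    and inv: "st (ideal_mult I V) = ringR"
  shows "st A = st (ideal_mult (ideal_mult A I) V)"
proof -
  have "st A = st (ideal_mult A (st (ideal_mult I V)))"
    using inv ideal_mult_ringR_right[OF frac_ideal_R_submodule[OF A]] by simp
  also have "\<dots> = st (ideal_mult A (ideal_mult I V))"
    using star_ideal_mult_star_right A I V frac_ideal_ideal_mult by blast
  finally show ?thesis by (simp add: ideal_mult_assoc)
qed

lemma star_mult_cancel:
  assumes A: "frac_ideal A" and B: "frac_ideal B" and I: "frac_ideal I" and V: "frac_ideal V"
    and inv: "st (ideal_mult I V) = ringR"
    and eq: "st (ideal_mult A I) = st (ideal_mult B I)"
  shows "st A = st B"
proof -
  have "st A = st (ideal_mult (st (ideal_mult A I)) V)"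
    using star_eq_star_mult_mult_inverse[OF A I V inv]
      star_ideal_mult_star_left A I V frac_ideal_ideal_mult by metis
  also have "\<dots> = st B"
    unfolding eq
    using star_eq_star_mult_mult_inverse[OF B I V inv]
      star_ideal_mult_star_left B I V frac_ideal_ideal_mult by metis
  finally show ?thesis .
qed

lemma star_eq_if_star_mult_pow_eq:
  assumes J: "frac_ideal J" and I: "frac_ideal I" and V: "frac_ideal V"
    and inv: "st (ideal_mult I V) = ringR"
  shows "st (ideal_mult J (ideal_pow I n)) = st (ideal_pow I (Suc n)) \<Longrightarrow> st J = st I"
proof (induction n)
  case 0
  then show ?case
    using ideal_mult_ringR_right frac_ideal_R_submodule J I by (metis ideal_pow.simps)
next
  case (Suc n)
  have "st (ideal_mult (ideal_mult J (ideal_pow I n)) I)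
      = st (ideal_mult (ideal_pow I (Suc n)) I)"
    using Suc.prems by (simp only: ideal_mult_assoc ideal_pow_Suc_right[symmetric])
  then have "st (ideal_mult J (ideal_pow I n)) = st (ideal_pow I (Suc n))"
    by (rule star_mult_cancel[OF frac_ideal_ideal_mult[OF J frac_ideal_ideal_pow[OF I]]
          frac_ideal_ideal_pow[OF I] I V inv])
  then show ?case by (rule Suc.IH)
qed

lemma star_ideal_pow_of_star_idempotent:
  assumes I: "frac_ideal I" and sq: "st (ideal_mult I I) = st I"
  shows "st (ideal_pow I (Suc n)) = st I"
proof (induction n)
  case 0
  show ?case using ideal_mult_ringR_right[OF frac_ideal_R_submodule[OF I]] by simp
next
  case (Suc n)
  have "st (ideal_pow I (Suc (Suc n))) = st (ideal_mult I (st (ideal_pow I (Suc n))))"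
    using star_ideal_mult_star_right[OF I frac_ideal_ideal_pow[OF I, of "Suc n"]] by simp
  also have "\<dots> = st (ideal_mult I I)"
    using Suc.IH star_ideal_mult_star_right[OF I I] by simp
  finally show ?case using sq by simp
qed

lemma star_basic_if_star_invertible:
  assumes I: "nz_ideal I" and inv: "st (ideal_mult I (frac_inv I)) = ringR"
  shows "star_basic st I"
  unfolding star_basic_def star_reduction_def
  using star_eq_if_star_mult_pow_eq[OF frac_ideal_if_nz_ideal
      frac_ideal_if_nz_ideal[OF I] frac_ideal_frac_inv[OF I] inv]
  by blast

lemma star_basic_if_star_idempotent:
  assumes I: "nz_ideal I" and sq: "st (ideal_mult I I) = st I"
  shows "star_basic st I"
  unfolding star_basic_def
proof (intro allI impI)
  fix J assume "star_reduction st J I"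
  then obtain n where J: "nz_ideal J" "J \<subseteq> I"
    and red: "st (ideal_mult J (ideal_pow I n)) = st (ideal_pow I (Suc n))"
    unfolding star_reduction_def by blast
  have fI: "frac_ideal I" and fJ: "frac_ideal J"
    using I J frac_ideal_if_nz_ideal by blast+
  have "ideal_mult J (ideal_pow I n) \<subseteq> J"
    using J I ideal_mult_subset_left ideal_pow_subset_ringR
    unfolding nz_ideal_def by blast
  then have "st I \<subseteq> st J"
    using red star_ideal_pow_of_star_idempotent[OF fI sq] star_mono fJ
      frac_ideal_ideal_mult[OF fJ frac_ideal_ideal_pow[OF fI]] by metis
  moreover have "st J \<subseteq> st I"
    using star_mono fJ fI J(2) by blast
  ultimately show "st J = st I" by blast
qed

end

theorem lemma1p2:
  fixes st :: "'a::idom fract set \<Rightarrow> 'a fract set"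
  assumes "star_operation st"
  shows "(\<forall>I. nz_ideal I \<and> st (ideal_mult I (frac_inv I)) = ringR \<longrightarrow> star_basic st I)
       \<and> (\<forall>I. nz_ideal I \<and> st (ideal_mult I I) = st I \<longrightarrow> star_basic st I)"
proof -
  interpret star_op st using assms by unfold_locales
  show ?thesis
    using star_basic_if_star_invertible star_basic_if_star_idempotent by blast
qed

end
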